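(* Let $R$ be a commutative ring, $M$ an $R$-module and $c$ a closure operation of finite type on $\mathrm{SMod}(M|R)$. Then $\mathrm{SMod}^c(M|R):=\{N\in\mathrm{SMod}(M|R)\mid N=N^c\}$, with the topology induced by the hull-kernel topology, is a spectral space; moreover, $\mathrm{SMod}^c(M|R)$ is closed in $\mathrm{SMod}(M|R)$ endowed with the constructible topology.
   Context: $\mathrm{SMod}(M|R)$ is the set of $R$-submodules of $M$; its hull-kernel topology has as subbasis of closed sets the sets $\boldsymbol V(x_1,\dots,x_m):=\{N\mid x_1,\dots,x_m\in N\}$ for finite $\{x_1,\dots,x_m\}\subseteq M$; with it, $\mathrm{SMod}(M|R)$ is spectral. A closure operation on $\mathrm{SMod}(M|R)$ is a map $N\mapsto N^c$ that is extensive ($N\subseteq N^c$), order-preserving and idempotent; it is of finite type if $N^c=\bigcup\{L^c\mid L\subseteq N,\ L \text{ finitely generated submodule}\}$ for all $N$. The constructible topology on a spectral space $X$ is the coarsest topology for which all quasi-compact open subsets of $X$ are clopen. *)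

theory Defs
  imports "HOL-Analysis.Analysis" "HOL-Algebra.Module"
begin

definition SMod :: "('a, 'c) ring_scheme \<Rightarrow> ('a, 'b, 'd) module_scheme \<Rightarrow> 'b set set" where
  "SMod R M = {N. submodule N R M}"

definition V_sub :: "('a, 'c) ring_scheme \<Rightarrow> ('a, 'b, 'd) module_scheme \<Rightarrow> 'b set \<Rightarrow> 'b set set" where
  "V_sub R M F = {N \<in> SMod R M. F \<subseteq> N}"

text \<open>Hull-kernel topology: the sets V(F), F finite, form a subbasis of closed sets, so their
  complements (together with the whole space) form a subbasis of open sets.\<close>
definition hull_kernel_topology :: "('a, 'c) ring_scheme \<Rightarrow> ('a, 'b, 'd) module_scheme \<Rightarrow> 'b set topology" where
  "hull_kernel_topology R M =
     topology_generated_by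
       (insert (SMod R M) {SMod R M - V_sub R M F | F. finite F \<and> F \<subseteq> carrier M})"

definition gen_submodule :: "('a, 'c) ring_scheme \<Rightarrow> ('a, 'b, 'd) module_scheme \<Rightarrow> 'b set \<Rightarrow> 'b set" where
  "gen_submodule R M F = \<Inter> {N \<in> SMod R M. F \<subseteq> N}"

definition fin_gen_submodule :: "('a, 'c) ring_scheme \<Rightarrow> ('a, 'b, 'd) module_scheme \<Rightarrow> 'b set \<Rightarrow> bool" where
  "fin_gen_submodule R M L \<longleftrightarrow> (\<exists>F. finite F \<and> F \<subseteq> carrier M \<and> L = gen_submodule R M F)"

definition closure_operation ::
  "('a, 'c) ring_scheme \<Rightarrow> ('a, 'b, 'd) module_scheme \<Rightarrow> ('b set \<Rightarrow> 'b set) \<Rightarrow> bool" where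
  "closure_operation R M c \<longleftrightarrow>
     (\<forall>N \<in> SMod R M. c N \<in> SMod R M) \<and>
     (\<forall>N \<in> SMod R M. N \<subseteq> c N) \<and>
     (\<forall>N \<in> SMod R M. \<forall>N' \<in> SMod R M. N \<subseteq> N' \<longrightarrow> c N \<subseteq> c N') \<and>
     (\<forall>N \<in> SMod R M. c (c N) = c N)"

definition finite_type ::
  "('a, 'c) ring_scheme \<Rightarrow> ('a, 'b, 'd) module_scheme \<Rightarrow> ('b set \<Rightarrow> 'b set) \<Rightarrow> bool" where
  "finite_type R M c \<longleftrightarrow>
     (\<forall>N \<in> SMod R M. c N = \<Union> {c L | L. L \<subseteq> N \<and> fin_gen_submodule R M L})"

definition closed_SMod ::
  "('a, 'c) ring_scheme \<Rightarrow> ('a, 'b, 'd) module_scheme \<Rightarrow> ('b set \<Rightarrow> 'b set) \<Rightarrow> 'b set set" where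
  "closed_SMod R M c = {N \<in> SMod R M. N = c N}"

definition irreducible_in :: "'a topology \<Rightarrow> 'a set \<Rightarrow> bool" where
  "irreducible_in X Z \<longleftrightarrow> Z \<subseteq> topspace X \<and> Z \<noteq> {} \<and>
     (\<forall>C1 C2. closedin X C1 \<and> closedin X C2 \<and> Z \<subseteq> C1 \<union> C2 \<longrightarrow> Z \<subseteq> C1 \<or> Z \<subseteq> C2)"

definition spectral_space :: "'a topology \<Rightarrow> bool" where
  "spectral_space X \<longleftrightarrow>
     compact_space X \<and> t0_space X \<and>
     (\<forall>U V. openin X U \<and> compactin X U \<and> openin X V \<and> compactin X V \<longrightarrow> compactin X (U \<inter> V)) \<and>
     (\<forall>W x. openin X W \<and> x \<in> W \<longrightarrow> (\<exists>U. openin X U \<and> compactin X U \<and> x \<in> U \<and> U \<subseteq> W)) \<and>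
     (\<forall>Z. closedin X Z \<and> irreducible_in X Z \<longrightarrow> (\<exists>x \<in> Z. Z = X closure_of {x}))"

text \<open>Constructible topology: the coarsest topology on the same carrier in which all
  quasi-compact open sets are clopen.\<close>
definition constructible_topology :: "'a topology \<Rightarrow> 'a topology" where
  "constructible_topology X =
     topology_generated_by
       ({U. openin X U \<and> compactin X U} \<union> {topspace X - U | U. openin X U \<and> compactin X U})"

end

theory Submission
  imports Defs
begin

text \<open>Let \<open>avoiding G\<close> be the set of submodules disjoint from \<open>G\<close>; for finite \<open>G\<close> these sets
  form a basis of the hull-kernel topology. On the \<open>c\<close>-closed submodules the sets \<open>avoiding G\<close> are
  quasi-compact even for infinite \<open>G\<close>: by Alexander's subbase theorem for the subbasis
  \<open>avoiding {x}\<close> this amounts to a finite character property, namely that if every finite subset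
  of \<open>A\<close> lies in a \<open>c\<close>-closed submodule disjoint from \<open>G\<close>, then so does \<open>A\<close>; since \<open>c\<close> is of
  finite type, the closure of the submodule generated by \<open>A\<close> is such a submodule. Consequently the
  quasi-compact opens are the finite unions of basic opens, the closure of a point \<open>N\<close> is the set
  of \<open>c\<close>-closed submodules containing \<open>N\<close>, and an irreducible closed set \<open>Z\<close> has the generic
  point \<open>\<Inter>Z\<close>. For the constructible topology: if \<open>N \<noteq> c N\<close>, pick \<open>z \<in> c N - N\<close>; then
  \<open>z \<in> c \<langle>E\<rangle>\<close> for a finite \<open>E \<subseteq> N\<close>, and the constructible set of submodules containing \<open>E\<close>
  but not \<open>z\<close> is a neighbourhood of \<open>N\<close> without \<open>c\<close>-closed points.\<close>

definition avoiding :: "'b set \<Rightarrow> 'b set set" where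
  "avoiding G = {N. G \<inter> N = {}}"

lemma mem_avoiding [simp]: "N \<in> avoiding G \<longleftrightarrow> G \<inter> N = {}"
  by (simp add: avoiding_def)

lemma avoiding_empty [simp]: "avoiding {} = UNIV"
  by auto

lemma avoiding_Un: "avoiding (G1 \<union> G2) = avoiding G1 \<inter> avoiding G2"
  by auto

lemma INT_avoiding_singleton: "(\<Inter>x\<in>A. avoiding {x}) = avoiding A"
  by auto

abbreviation closed_SMod_topology ::
  "('a, 'c) ring_scheme \<Rightarrow> ('a, 'b, 'd) module_scheme \<Rightarrow> ('b set \<Rightarrow> 'b set) \<Rightarrow> 'b set topology" where
  "closed_SMod_topology R M c \<equiv> subtopology (hull_kernel_topology R M) (closed_SMod R M c)"

subsection \<open>Submodules\<close>

lemma SMod_subset_carrier: "N \<in> SMod R M \<Longrightarrow> N \<subseteq> carrier M"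
  unfolding SMod_def using submodule.axioms(1) subgroup.subset by fastforce

lemma closed_SMod_subset: "closed_SMod R M c \<subseteq> SMod R M"
  unfolding closed_SMod_def by auto

lemma gen_submodule_superset: "F \<subseteq> gen_submodule R M F"
  unfolding gen_submodule_def by auto

lemma gen_submodule_least: "N \<in> SMod R M \<Longrightarrow> F \<subseteq> N \<Longrightarrow> gen_submodule R M F \<subseteq> N"
  unfolding gen_submodule_def by auto

lemma gen_submodule_mono: "F \<subseteq> G \<Longrightarrow> gen_submodule R M F \<subseteq> gen_submodule R M G"
  unfolding gen_submodule_def by auto

context module
begin

lemma carrier_in_SMod: "carrier M \<in> SMod R M"
  unfolding SMod_def using carrier_is_submodule by simp

lemma zero_in_SMod: "N \<in> SMod R M \<Longrightarrow> \<zero>\<^bsub>M\<^esub> \<in> N"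
  unfolding SMod_def using subgroup.one_closed[OF submodule.axioms(1)] by fastforce

lemma Inter_in_SMod:
  assumes "Z \<subseteq> SMod R M" "Z \<noteq> {}"
  shows "\<Inter>Z \<in> SMod R M"
proof -
  have sub: "submodule N R M" if "N \<in> Z" for N
    using assms(1) that unfolding SMod_def by auto
  have "submodule (\<Inter>Z) R M"
  proof (rule submoduleI)
    show "\<Inter>Z \<subseteq> carrier M" using assms SMod_subset_carrier by blast
    show "\<zero>\<^bsub>M\<^esub> \<in> \<Inter>Z" using assms(1) zero_in_SMod by blast
  qed (use submoduleE(3-5)[OF sub] in blast)+
  then show ?thesis unfolding SMod_def by simp
qed

lemma Union_directed_in_SMod:
  assumes "Z \<subseteq> SMod R M" "Z \<noteq> {}"
    and directed: "\<And>N1 N2. N1 \<in> Z \<Longrightarrow> N2 \<in> Z \<Longrightarrow> \<exists>N3\<in>Z. N1 \<union> N2 \<subseteq> N3"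
  shows "\<Union>Z \<in> SMod R M"
proof -
  have sub: "submodule N R M" if "N \<in> Z" for N
    using assms(1) that unfolding SMod_def by auto
  have "submodule (\<Union>Z) R M"
  proof (rule submoduleI)
    show "\<Union>Z \<subseteq> carrier M" using assms(1) SMod_subset_carrier by blast
    show "\<zero>\<^bsub>M\<^esub> \<in> \<Union>Z" using assms(1,2) zero_in_SMod by blast
    show "a \<oplus>\<^bsub>M\<^esub> b \<in> \<Union>Z" if ab: "a \<in> \<Union>Z" "b \<in> \<Union>Z" for a b
    proof -
      obtain N1 N2 where "N1 \<in> Z" "a \<in> N1" "N2 \<in> Z" "b \<in> N2" using ab by blast
      with directed obtain N3 where "N3 \<in> Z" "a \<in> N3" "b \<in> N3" by blast
      then show ?thesis using submoduleE(5)[OF sub] by blast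
    qed
  qed (use submoduleE(3,4)[OF sub] in blast)+
  then show ?thesis unfolding SMod_def by simp
qed

lemma gen_submodule_in_SMod: "F \<subseteq> carrier M \<Longrightarrow> gen_submodule R M F \<in> SMod R M"
  unfolding gen_submodule_def using carrier_in_SMod by (intro Inter_in_SMod) auto

text \<open>The generated submodule is the directed union of the submodules generated by finite subsets.\<close>

lemma gen_submodule_finite_subset:
  assumes A: "A \<subseteq> carrier M" and E: "finite E" "E \<subseteq> gen_submodule R M A"
  shows "\<exists>A'. finite A' \<and> A' \<subseteq> A \<and> E \<subseteq> gen_submodule R M A'"
proof -
  define Z where "Z = {gen_submodule R M A0 | A0. finite A0 \<and> A0 \<subseteq> A}"
  have "\<Union>Z \<in> SMod R M"
  proof (rule Union_directed_in_SMod)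
    show "Z \<subseteq> SMod R M" unfolding Z_def using A gen_submodule_in_SMod by blast
    show "Z \<noteq> {}" unfolding Z_def by blast
    fix N1 N2 assume "N1 \<in> Z" "N2 \<in> Z"
    then obtain A1 A2 where "finite A1" "A1 \<subseteq> A" "N1 = gen_submodule R M A1"
      "finite A2" "A2 \<subseteq> A" "N2 = gen_submodule R M A2" unfolding Z_def by blast
    then show "\<exists>N3\<in>Z. N1 \<union> N2 \<subseteq> N3" unfolding Z_def
      using gen_submodule_mono[of A1 "A1 \<union> A2" R M] gen_submodule_mono[of A2 "A1 \<union> A2" R M]
      by (intro bexI[of _ "gen_submodule R M (A1 \<union> A2)"]) auto
  qed
  moreover have "A \<subseteq> \<Union>Z"
  proof
    fix x assume "x \<in> A"
    then have "gen_submodule R M {x} \<in> Z" unfolding Z_def by blast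
    then show "x \<in> \<Union>Z" using gen_submodule_superset[of "{x}" R M] by blast
  qed
  ultimately have "E \<subseteq> \<Union>Z" using E(2) gen_submodule_least by blast
  with E(1) show ?thesis
  proof (induction E rule: finite_induct)
    case (insert x E)
    obtain A' where "finite A'" "A' \<subseteq> A" "E \<subseteq> gen_submodule R M A'"
      using insert.IH insert.prems by blast
    moreover obtain A0 where "finite A0" "A0 \<subseteq> A" "x \<in> gen_submodule R M A0"
      using insert.prems unfolding Z_def by blast
    ultimately show ?case
      using gen_submodule_mono[of A' "A' \<union> A0" R M] gen_submodule_mono[of A0 "A' \<union> A0" R M]
      by (intro exI[of _ "A' \<union> A0"]) auto
  qed auto
qed

end

subsection \<open>The hull-kernel topology\<close>

lemma topspace_hull_kernel_topology: "topspace (hull_kernel_topology R M) = SMod R M"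
  unfolding hull_kernel_topology_def by (auto simp: V_sub_def)

lemma openin_hull_kernel_avoiding:
  assumes "finite G" "G \<subseteq> carrier M"
  shows "openin (hull_kernel_topology R M) (avoiding G \<inter> SMod R M)"
  using assms
proof (induction G rule: finite_induct)
  case empty
  then show ?case unfolding hull_kernel_topology_def by (auto intro: topology_generated_by_Basis)
next
  case (insert x G)
  have "openin (hull_kernel_topology R M) (SMod R M - V_sub R M {x})"
    unfolding hull_kernel_topology_def using insert.prems by (intro topology_generated_by_Basis) blast
  moreover have "avoiding (insert x G) \<inter> SMod R M = (SMod R M - V_sub R M {x}) \<inter> (avoiding G \<inter> SMod R M)"
    unfolding V_sub_def by auto
  ultimately show ?case using insert by (simp add: openin_Int)
qed

lemma hull_kernel_basis:
  assumes "openin (hull_kernel_topology R M) W" "N \<in> W"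
  shows "\<exists>G. finite G \<and> G \<subseteq> carrier M \<and> N \<in> avoiding G \<and> avoiding G \<inter> SMod R M \<subseteq> W"
proof -
  have "generate_topology_on
      (insert (SMod R M) {SMod R M - V_sub R M F | F. finite F \<and> F \<subseteq> carrier M}) W"
    using assms(1) unfolding hull_kernel_topology_def by (simp add: openin_topology_generated_by_iff)
  then show ?thesis using assms(2)
  proof (induction arbitrary: N)
    case (Int a b)
    then have "N \<in> a" "N \<in> b" by simp_all
    obtain G1 where "finite G1" "G1 \<subseteq> carrier M" "N \<in> avoiding G1" "avoiding G1 \<inter> SMod R M \<subseteq> a"
      using Int.IH(1)[OF \<open>N \<in> a\<close>] by blast
    moreover obtain G2 where "finite G2" "G2 \<subseteq> carrier M" "N \<in> avoiding G2" "avoiding G2 \<inter> SMod R M \<subseteq> b"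
      using Int.IH(2)[OF \<open>N \<in> b\<close>] by blast
    ultimately show ?case by (intro exI[of _ "G1 \<union> G2"]) (auto simp: avoiding_Un)
  next
    case (UN K)
    then show ?case by (meson UnionE Union_upper order_trans)
  next
    case (Basis s)
    then consider "s = SMod R M"
      | F where "finite F" "F \<subseteq> carrier M" "s = SMod R M - V_sub R M F" by blast
    then show ?case
    proof cases
      case 1
      then show ?thesis by (intro exI[of _ "{}"]) auto
    next
      case 2
      then obtain x where "x \<in> F" "x \<notin> N" using Basis.prems by (auto simp: V_sub_def)
      with 2 show ?thesis by (intro exI[of _ "{x}"]) (auto simp: V_sub_def)
    qed
  qed simp
qed

lemma openin_subtopology_hull_kernel_avoiding:
  assumes "X \<subseteq> SMod R M" "finite G" "G \<subseteq> carrier M"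
  shows "openin (subtopology (hull_kernel_topology R M) X) (avoiding G \<inter> X)"
proof -
  have "openin (subtopology (hull_kernel_topology R M) X) (avoiding G \<inter> SMod R M \<inter> X)"
    using openin_hull_kernel_avoiding[OF assms(2,3)] by (rule openin_subtopology_Int)
  moreover have "avoiding G \<inter> SMod R M \<inter> X = avoiding G \<inter> X" using assms(1) by blast
  ultimately show ?thesis by simp
qed

lemma openin_subtopology_hull_kernel_iff:
  assumes "X \<subseteq> SMod R M"
  shows "openin (subtopology (hull_kernel_topology R M) X) W \<longleftrightarrow>
    W \<subseteq> X \<and> (\<forall>N\<in>W. \<exists>G. finite G \<and> G \<subseteq> carrier M \<and> N \<in> avoiding G \<and> avoiding G \<inter> X \<subseteq> W)"
  (is "?lhs \<longleftrightarrow> ?rhs")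
proof
  assume ?lhs
  then obtain T where T: "openin (hull_kernel_topology R M) T" "W = T \<inter> X"
    by (auto simp: openin_subtopology)
  show ?rhs
  proof (intro conjI ballI)
    show "W \<subseteq> X" using T(2) by blast
    fix N assume "N \<in> W"
    then obtain G where "finite G" "G \<subseteq> carrier M" "N \<in> avoiding G" "avoiding G \<inter> SMod R M \<subseteq> T"
      using hull_kernel_basis[OF T(1)] T(2) by blast
    then show "\<exists>G. finite G \<and> G \<subseteq> carrier M \<and> N \<in> avoiding G \<and> avoiding G \<inter> X \<subseteq> W"
      using T(2) assms by blast
  qed
next
  assume ?rhs
  then show ?lhs
    using openin_subtopology_hull_kernel_avoiding[OF assms] by (subst openin_subopen) blast
qed

lemma closedin_subtopology_hull_kernel_containing:
  assumes "X \<subseteq> SMod R M" "g \<in> carrier M"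
  shows "closedin (subtopology (hull_kernel_topology R M) X) {N \<in> X. g \<in> N}"
proof -
  let ?Y = "subtopology (hull_kernel_topology R M) X"
  have "topspace ?Y = X" using assms(1) by (auto simp: topspace_hull_kernel_topology)
  moreover have "X - {N \<in> X. g \<in> N} = avoiding {g} \<inter> X" by auto
  ultimately show ?thesis
    using openin_subtopology_hull_kernel_avoiding[OF assms(1), of "{g}"] assms(2)
    by (simp add: closedin_def)
qed

lemma closure_of_singleton_hull_kernel:
  assumes X: "X \<subseteq> SMod R M" and N0: "N0 \<in> X"
  shows "subtopology (hull_kernel_topology R M) X closure_of {N0} = {N \<in> X. N0 \<subseteq> N}"
proof -
  let ?Y = "subtopology (hull_kernel_topology R M) X"
  have topY: "topspace ?Y = X" using X by (auto simp: topspace_hull_kernel_topology)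
  show ?thesis
  proof (intro Set.set_eqI iffI) \<comment> \<open>plain \<open>set_eqI\<close> is shadowed by HOL-Algebra\<close>
    fix N
    assume "N \<in> ?Y closure_of {N0}"
    then have N: "N \<in> X" and nhds: "\<forall>T. N \<in> T \<and> openin ?Y T \<longrightarrow> N0 \<in> T"
      by (auto simp: in_closure_of topY)
    have "x \<in> N" if "x \<in> N0" for x
    proof -
      have "x \<in> carrier M" using that N0 X SMod_subset_carrier[of N0 R M] by blast
      then have "openin ?Y (avoiding {x} \<inter> X)"
        using openin_subtopology_hull_kernel_avoiding[OF X, of "{x}"] by simp
      then show "x \<in> N" using nhds[THEN spec, of "avoiding {x} \<inter> X"] N that by auto
    qed
    with N show "N \<in> {N \<in> X. N0 \<subseteq> N}" by blast
  next
    fix N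
    assume N: "N \<in> {N \<in> X. N0 \<subseteq> N}"
    have "N0 \<in> T" if T: "N \<in> T" "openin ?Y T" for T
    proof -
      obtain G where "N \<in> avoiding G" "avoiding G \<inter> X \<subseteq> T"
        using T openin_subtopology_hull_kernel_iff[OF X] by blast
      moreover from this(1) have "N0 \<in> avoiding G \<inter> X" using N0 N by auto
      ultimately show ?thesis by blast
    qed
    with N X show "N \<in> ?Y closure_of {N0}" by (auto simp: in_closure_of topspace_hull_kernel_topology)
  qed
qed

lemma subtopology_hull_kernel_subbase:
  assumes C: "C \<subseteq> SMod R M"
  shows "topology (arbitrary union_of
      (finite intersection_of (\<lambda>U. U \<in> insert UNIV ((\<lambda>x. avoiding {x}) ` carrier M)) relative_to C))
    = subtopology (hull_kernel_topology R M) C"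
    (is "topology (arbitrary union_of (finite intersection_of (\<lambda>U. U \<in> ?B) relative_to C)) = ?Y")
proof (rule topology_base_unique)
  let ?P = "finite intersection_of (\<lambda>U. U \<in> ?B) relative_to C"
  have basic: "?P T \<longleftrightarrow> (\<exists>G. finite G \<and> G \<subseteq> carrier M \<and> T = C \<inter> avoiding G)" for T
  proof
    assume "?P T"
    then obtain S where S: "(finite intersection_of (\<lambda>U. U \<in> ?B)) S" "T = C \<inter> S"
      unfolding relative_to_def by blast
    then obtain \<F> where \<F>: "finite \<F>" "\<F> \<subseteq> ?B" "S = \<Inter>\<F>"
      unfolding intersection_of_def by auto
    have "\<F> - {UNIV} \<subseteq> (\<lambda>x. avoiding {x}) ` carrier M" using \<F>(2) by blast
    from finite_subset_image[OF finite_Diff[OF \<F>(1)] this]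
    obtain G where G: "G \<subseteq> carrier M" "finite G" "\<F> - {UNIV} = (\<lambda>x. avoiding {x}) ` G"
      by blast
    have "S = \<Inter>(\<F> - {UNIV})" using \<F>(3) by auto
    also have "\<dots> = avoiding G" using G(3) INT_avoiding_singleton by simp
    finally show "\<exists>G. finite G \<and> G \<subseteq> carrier M \<and> T = C \<inter> avoiding G"
      using G(1,2) S(2) by blast
  next
    assume "\<exists>G. finite G \<and> G \<subseteq> carrier M \<and> T = C \<inter> avoiding G"
    then obtain G where G: "finite G" "G \<subseteq> carrier M" "T = C \<inter> avoiding G" by blast
    have "(finite intersection_of (\<lambda>U. U \<in> ?B)) (\<Inter>((\<lambda>x. avoiding {x}) ` G))"
      unfolding intersection_of_def using G(2)
      by (intro exI[of _ "(\<lambda>x. avoiding {x}) ` G"]) (auto simp: \<open>finite G\<close>)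
    then show "?P T" unfolding relative_to_def INT_avoiding_singleton using G(3) by blast
  qed
  show "openin ?Y S" if "?P S" for S
  proof -
    obtain G where "finite G" "G \<subseteq> carrier M" "S = C \<inter> avoiding G"
      using \<open>?P S\<close> basic by blast
    then show ?thesis using openin_subtopology_hull_kernel_avoiding[OF C] by (simp add: Int_commute)
  qed
  show "\<exists>B. ?P B \<and> N \<in> B \<and> B \<subseteq> U" if U: "openin ?Y U" "N \<in> U" for U N
  proof -
    obtain G where "finite G" "G \<subseteq> carrier M" "N \<in> avoiding G" "avoiding G \<inter> C \<subseteq> U" "N \<in> C"
      using U unfolding openin_subtopology_hull_kernel_iff[OF C] by blast
    then show ?thesis using basic[of "C \<inter> avoiding G"] by blast
  qed
qed

lemma compact_openin_hull_kernel_finite_Union: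
  assumes X: "X \<subseteq> SMod R M"
    and U: "openin (subtopology (hull_kernel_topology R M) X) U"
      "compactin (subtopology (hull_kernel_topology R M) X) U"
  shows "\<exists>\<G>. finite \<G> \<and> U = (\<Union>G\<in>\<G>. avoiding G \<inter> X)"
proof -
  define \<G> where "\<G> = {G. finite G \<and> G \<subseteq> carrier M \<and> avoiding G \<inter> X \<subseteq> U}"
  have "U \<subseteq> (\<Union>G\<in>\<G>. avoiding G \<inter> X)"
    using U(1) unfolding openin_subtopology_hull_kernel_iff[OF X] \<G>_def by blast
  moreover have "\<forall>B\<in>(\<lambda>G. avoiding G \<inter> X) ` \<G>. openin (subtopology (hull_kernel_topology R M) X) B"
    unfolding \<G>_def using openin_subtopology_hull_kernel_avoiding[OF X] by blast
  ultimately obtain \<F> where \<F>: "finite \<F>" "\<F> \<subseteq> (\<lambda>G. avoiding G \<inter> X) ` \<G>" "U \<subseteq> \<Union>\<F>"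
    using U(2) unfolding compactin_def by metis
  from finite_subset_image[OF \<F>(1,2)]
  obtain \<G>' where "\<G>' \<subseteq> \<G>" "finite \<G>'" "\<F> = (\<lambda>G. avoiding G \<inter> X) ` \<G>'"
    by blast
  with \<F>(3) have "U \<subseteq> (\<Union>G\<in>\<G>'. avoiding G \<inter> X)" by simp
  moreover have "(\<Union>G\<in>\<G>'. avoiding G \<inter> X) \<subseteq> U" using \<open>\<G>' \<subseteq> \<G>\<close> unfolding \<G>_def by blast
  ultimately show ?thesis using \<open>finite \<G>'\<close> by blast
qed

lemma irreducible_in_Union_closedin:
  assumes "irreducible_in Y Z" "finite \<K>" "\<And>K. K \<in> \<K> \<Longrightarrow> closedin Y K" "Z \<subseteq> \<Union>\<K>"
  shows "\<exists>K\<in>\<K>. Z \<subseteq> K"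
  using assms(2-4)
proof (induction \<K> rule: finite_induct)
  case empty
  then show ?case using assms(1) unfolding irreducible_in_def by auto
next
  case (insert K \<K>)
  have "closedin Y K" "closedin Y (\<Union>\<K>)" "Z \<subseteq> K \<union> \<Union>\<K>"
    using insert by (auto intro: closedin_Union)
  then have "Z \<subseteq> K \<or> Z \<subseteq> \<Union>\<K>"
    using assms(1) unfolding irreducible_in_def by blast
  moreover have "Z \<subseteq> \<Union>\<K> \<Longrightarrow> \<exists>K'\<in>\<K>. Z \<subseteq> K'"
    using insert.IH insert.prems(1) by simp
  ultimately show ?case by blast
qed

subsection \<open>Closure operations of finite type\<close>

locale finite_type_closure = module +
  fixes c
  assumes closure_operation: "closure_operation R M c"
    and finite_type: "finite_type R M c"
begin

lemma closure_in_SMod: "N \<in> SMod R M \<Longrightarrow> c N \<in> SMod R M"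
  using closure_operation by (simp add: closure_operation_def)

lemma closure_extensive: "N \<in> SMod R M \<Longrightarrow> N \<subseteq> c N"
  using closure_operation by (simp add: closure_operation_def)

lemma closure_mono: "N \<in> SMod R M \<Longrightarrow> N' \<in> SMod R M \<Longrightarrow> N \<subseteq> N' \<Longrightarrow> c N \<subseteq> c N'"
  using closure_operation by (simp add: closure_operation_def)

lemma closure_idem: "N \<in> SMod R M \<Longrightarrow> c (c N) = c N"
  using closure_operation by (simp add: closure_operation_def)

lemma closure_in_closed_SMod: "N \<in> SMod R M \<Longrightarrow> c N \<in> closed_SMod R M c"
  unfolding closed_SMod_def using closure_in_SMod closure_idem by simp

lemma mem_closure_finite_generators:
  assumes "N \<in> SMod R M" "x \<in> c N"
  shows "\<exists>E. finite E \<and> E \<subseteq> N \<and> x \<in> c (gen_submodule R M E)"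
proof -
  obtain L where "x \<in> c L" "L \<subseteq> N" "fin_gen_submodule R M L"
    using assms finite_type unfolding finite_type_def by blast
  moreover from \<open>fin_gen_submodule R M L\<close> obtain E where "finite E" "L = gen_submodule R M E"
    unfolding fin_gen_submodule_def by blast
  ultimately show ?thesis using gen_submodule_superset[of E R M] by blast
qed

lemma closure_gen_submodule_le_closed:
  assumes "N \<in> closed_SMod R M c" "E \<subseteq> N"
  shows "c (gen_submodule R M E) \<subseteq> N"
proof -
  have N: "N \<in> SMod R M" "c N = N" using assms(1) unfolding closed_SMod_def by auto
  then have "E \<subseteq> carrier M" using assms(2) SMod_subset_carrier[of N R M] by blast
  then have "gen_submodule R M E \<in> SMod R M" by (rule gen_submodule_in_SMod)
  then show ?thesis
    using closure_mono[OF _ N(1)] gen_submodule_least[OF N(1) assms(2)] N(2) by metis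
qed

lemma closed_SMod_Inter:
  assumes "Z \<subseteq> closed_SMod R M c" "Z \<noteq> {}"
  shows "\<Inter>Z \<in> closed_SMod R M c"
proof -
  have Z: "Z \<subseteq> SMod R M" using assms(1) closed_SMod_subset by blast
  then have I: "\<Inter>Z \<in> SMod R M" using Inter_in_SMod assms(2) by blast
  have "c (\<Inter>Z) \<subseteq> N" if "N \<in> Z" for N
    using closure_mono[OF I, of N] that Z assms(1) unfolding closed_SMod_def by blast
  then have "c (\<Inter>Z) = \<Inter>Z" using closure_extensive[OF I] by blast
  with I show ?thesis unfolding closed_SMod_def by simp
qed

lemma closed_SMod_avoiding_finite_character:
  assumes A: "A \<subseteq> carrier M"
    and fin: "\<And>A0. finite A0 \<Longrightarrow> A0 \<subseteq> A \<Longrightarrow> \<exists>N\<in>closed_SMod R M c. G \<inter> N = {} \<and> A0 \<subseteq> N"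
  shows "\<exists>N\<in>closed_SMod R M c. G \<inter> N = {} \<and> A \<subseteq> N"
proof -
  let ?L = "gen_submodule R M A"
  have L: "?L \<in> SMod R M" using gen_submodule_in_SMod[OF A] .
  have "g \<notin> c ?L" if g: "g \<in> G" for g
  proof
    assume "g \<in> c ?L"
    then obtain E where E: "finite E" "E \<subseteq> ?L" "g \<in> c (gen_submodule R M E)"
      using mem_closure_finite_generators[OF L] by blast
    then obtain A' where "finite A'" "A' \<subseteq> A" "E \<subseteq> gen_submodule R M A'"
      using gen_submodule_finite_subset[OF A E(1,2)] by blast
    moreover obtain N where N: "N \<in> closed_SMod R M c" "G \<inter> N = {}" "A' \<subseteq> N"
      using fin[OF \<open>finite A'\<close> \<open>A' \<subseteq> A\<close>] by blast
    moreover have "N \<in> SMod R M" using N(1) closed_SMod_subset by blast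
    ultimately have "E \<subseteq> N" using gen_submodule_least[of N R M A'] by blast
    then have "g \<in> N" using closure_gen_submodule_le_closed[OF N(1)] E(3) by blast
    then show False using N(2) g by blast
  qed
  moreover have "A \<subseteq> c ?L" using gen_submodule_superset[of A R M] closure_extensive[OF L] by blast
  ultimately show ?thesis using closure_in_closed_SMod[OF L] by blast
qed

lemma topspace_closed_SMod_topology: "topspace (closed_SMod_topology R M c) = closed_SMod R M c"
  using closed_SMod_subset by (auto simp: topspace_hull_kernel_topology)

lemma finite_subcover_avoiding_singletons:
  assumes \<C>: "\<C> \<subseteq> insert UNIV ((\<lambda>x. avoiding {x}) ` carrier M)"
    and cover: "avoiding G \<inter> closed_SMod R M c \<subseteq> \<Union>\<C>"
  shows "\<exists>\<C>'. finite \<C>' \<and> \<C>' \<subseteq> \<C> \<and> avoiding G \<inter> closed_SMod R M c \<subseteq> \<Union>\<C>'"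
proof (cases "UNIV \<in> \<C>")
  case True
  then show ?thesis by (intro exI[of _ "{UNIV}"]) auto
next
  case no_UNIV: False
  let ?X = "closed_SMod R M c"
  define A where "A = {x \<in> carrier M. avoiding {x} \<in> \<C>}"
  show ?thesis
  proof (cases "\<exists>A0. finite A0 \<and> A0 \<subseteq> A \<and> \<not> (\<exists>N\<in>?X. G \<inter> N = {} \<and> A0 \<subseteq> N)")
    case True
    then obtain A0 where A0: "finite A0" "A0 \<subseteq> A"
      and none: "\<not> (\<exists>N\<in>?X. G \<inter> N = {} \<and> A0 \<subseteq> N)" by blast
    have "avoiding G \<inter> ?X \<subseteq> (\<Union>x\<in>A0. avoiding {x})"
    proof
      fix N assume "N \<in> avoiding G \<inter> ?X"
      then have "N \<in> ?X" "G \<inter> N = {}" by auto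
      with none obtain x where "x \<in> A0" "x \<notin> N" by blast
      then show "N \<in> (\<Union>x\<in>A0. avoiding {x})" by auto
    qed
    then show ?thesis
      using A0 unfolding A_def by (intro exI[of _ "(\<lambda>x. avoiding {x}) ` A0"]) auto
  next
    case False
    then obtain N where N: "N \<in> ?X" "G \<inter> N = {}" "A \<subseteq> N"
      using closed_SMod_avoiding_finite_character[of A G] unfolding A_def by blast
    then have "N \<in> avoiding G \<inter> ?X" by simp
    with cover obtain K where "K \<in> \<C>" "N \<in> K" by blast
    with \<C> no_UNIV obtain x where "x \<in> carrier M" "K = avoiding {x}" by blast
    then have "x \<in> A" "x \<notin> N" using \<open>K \<in> \<C>\<close> \<open>N \<in> K\<close> unfolding A_def by auto
    then show ?thesis using N(3) by blast
  qed
qed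

lemma compactin_avoiding:
  "compactin (closed_SMod_topology R M c) (avoiding G \<inter> closed_SMod R M c)"
proof -
  let ?B = "insert UNIV ((\<lambda>x. avoiding {x}) ` carrier M)"
  define C where "C = avoiding G \<inter> closed_SMod R M c"
  have CS: "C \<subseteq> SMod R M" unfolding C_def using closed_SMod_subset by blast
  have "compact_space (subtopology (hull_kernel_topology R M) C)"
  proof (rule Alexander_subbase_alt[where \<B> = ?B])
    show "C \<subseteq> \<Union>?B" by blast
    show "topology (arbitrary union_of (finite intersection_of (\<lambda>x. x \<in> ?B) relative_to C))
        = subtopology (hull_kernel_topology R M) C"
      by (rule subtopology_hull_kernel_subbase[OF CS])
    show "\<exists>\<C>'. finite \<C>' \<and> \<C>' \<subseteq> \<C> \<and> C \<subseteq> \<Union>\<C>'" if "\<C> \<subseteq> ?B" "C \<subseteq> \<Union>\<C>" for \<C>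
      using finite_subcover_avoiding_singletons that unfolding C_def by blast
  qed
  moreover have "C \<subseteq> topspace (closed_SMod_topology R M c)"
    unfolding C_def topspace_closed_SMod_topology by blast
  ultimately show ?thesis
    by (simp add: compactin_subspace subtopology_subtopology C_def Int_absorb1 inf_commute)
qed

lemma compactin_Int_closed_SMod_topology:
  assumes "openin (closed_SMod_topology R M c) U" "compactin (closed_SMod_topology R M c) U"
    and "openin (closed_SMod_topology R M c) V" "compactin (closed_SMod_topology R M c) V"
  shows "compactin (closed_SMod_topology R M c) (U \<inter> V)"
proof -
  let ?X = "closed_SMod R M c"
  obtain \<G>1 \<G>2 where "finite \<G>1" "U = (\<Union>G\<in>\<G>1. avoiding G \<inter> ?X)"
    and "finite \<G>2" "V = (\<Union>G\<in>\<G>2. avoiding G \<inter> ?X)"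
    using compact_openin_hull_kernel_finite_Union[OF closed_SMod_subset[of R M c]] assms by metis
  then have "U \<inter> V = (\<Union>(G1, G2)\<in>\<G>1 \<times> \<G>2. avoiding (G1 \<union> G2) \<inter> ?X)"
    by (auto simp: avoiding_Un)
  also have "compactin (closed_SMod_topology R M c) \<dots>"
    using \<open>finite \<G>1\<close> \<open>finite \<G>2\<close> compactin_avoiding by (intro compactin_Union) auto
  finally show ?thesis .
qed

lemma closed_irreducible_generic_point:
  assumes Z: "closedin (closed_SMod_topology R M c) Z" "irreducible_in (closed_SMod_topology R M c) Z"
  shows "\<Inter>Z \<in> Z \<and> Z = closed_SMod_topology R M c closure_of {\<Inter>Z}"
proof -
  let ?X = "closed_SMod R M c" and ?Y = "closed_SMod_topology R M c"
  have ZX: "Z \<subseteq> ?X" "Z \<noteq> {}"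
    using Z(2) unfolding irreducible_in_def topspace_closed_SMod_topology by auto
  have N0: "\<Inter>Z \<in> ?X" using closed_SMod_Inter[OF ZX] .
  have "\<Inter>Z \<in> Z"
  proof (rule ccontr)
    assume "\<Inter>Z \<notin> Z"
    have "openin ?Y (?X - Z)"
      using Z(1) unfolding closedin_def topspace_closed_SMod_topology by blast
    then have "\<forall>N\<in>?X - Z. \<exists>G. finite G \<and> G \<subseteq> carrier M \<and> N \<in> avoiding G \<and> avoiding G \<inter> ?X \<subseteq> ?X - Z"
      using openin_subtopology_hull_kernel_iff[OF closed_SMod_subset[of R M c]] by simp
    with \<open>\<Inter>Z \<notin> Z\<close> N0
    obtain G where G: "finite G" "G \<subseteq> carrier M" "\<Inter>Z \<in> avoiding G" "avoiding G \<inter> ?X \<subseteq> ?X - Z"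
      by blast
    let ?V = "\<lambda>g. {N \<in> ?X. g \<in> N}"
    have cover: "Z \<subseteq> \<Union>(?V ` G)"
    proof
      fix N assume "N \<in> Z"
      with ZX(1) G(4) have "N \<in> ?X" "N \<notin> avoiding G" by auto
      then show "N \<in> \<Union>(?V ` G)" by auto
    qed
    have closed: "closedin ?Y K" if "K \<in> ?V ` G" for K
      using that G(2) closedin_subtopology_hull_kernel_containing[OF closed_SMod_subset[of R M c]] by blast
    obtain K where "K \<in> ?V ` G" "Z \<subseteq> K"
      using irreducible_in_Union_closedin[OF Z(2) finite_imageI[OF G(1)] closed cover] by blast
    then obtain g where "g \<in> G" "g \<in> \<Inter>Z" using ZX(1) by blast
    then show False using G(3) by auto
  qed
  moreover have "?Y closure_of {\<Inter>Z} \<subseteq> Z" using Z(1) \<open>\<Inter>Z \<in> Z\<close> by (simp add: closure_of_minimal)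
  moreover have "Z \<subseteq> ?Y closure_of {\<Inter>Z}"
    using closure_of_singleton_hull_kernel[OF closed_SMod_subset N0] ZX(1) by blast
  ultimately show ?thesis by blast
qed

theorem spectral_space_closed_SMod: "spectral_space (closed_SMod_topology R M c)"
  unfolding spectral_space_def
proof (intro conjI allI impI)
  let ?X = "closed_SMod R M c" and ?Y = "closed_SMod_topology R M c"
  show "compact_space ?Y"
    unfolding compact_space_def topspace_closed_SMod_topology using compactin_avoiding[of "{}"] by simp
  show "t0_space ?Y"
    unfolding t0_space_closure_of_sing topspace_closed_SMod_topology
    using closure_of_singleton_hull_kernel[OF closed_SMod_subset[of R M c]] by blast
  show "compactin ?Y (U \<inter> V)" if "openin ?Y U \<and> compactin ?Y U \<and> openin ?Y V \<and> compactin ?Y V" for U V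
    using that compactin_Int_closed_SMod_topology by blast
  show "\<exists>U. openin ?Y U \<and> compactin ?Y U \<and> N \<in> U \<and> U \<subseteq> W" if WN: "openin ?Y W \<and> N \<in> W" for W N
  proof -
    from WN have "N \<in> ?X" and "\<forall>N\<in>W. \<exists>G. finite G \<and> G \<subseteq> carrier M \<and> N \<in> avoiding G \<and> avoiding G \<inter> ?X \<subseteq> W"
      using openin_subtopology_hull_kernel_iff[OF closed_SMod_subset[of R M c]] by auto
    moreover from this(2) WN obtain G
      where "finite G" "G \<subseteq> carrier M" "N \<in> avoiding G" "avoiding G \<inter> ?X \<subseteq> W"
      by blast
    ultimately show ?thesis
      using openin_subtopology_hull_kernel_avoiding[OF closed_SMod_subset[of R M c]] compactin_avoiding
      by (intro exI[of _ "avoiding G \<inter> ?X"]) auto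
  qed
  show "\<exists>N\<in>Z. Z = ?Y closure_of {N}" if "closedin ?Y Z \<and> irreducible_in ?Y Z" for Z
    using that closed_irreducible_generic_point by blast
qed

end

text \<open>The identity is a closure operation of finite type whose closed submodules are all submodules,
  so compactness of basic open sets in the full hull-kernel topology is a special case.\<close>

lemma (in module) finite_type_closure_id: "finite_type_closure R M id"
proof unfold_locales
  show "closure_operation R M id" unfolding closure_operation_def by simp
  have "N \<subseteq> \<Union>{L. L \<subseteq> N \<and> fin_gen_submodule R M L}" if "N \<in> SMod R M" for N
  proof
    fix x assume "x \<in> N"
    then have "gen_submodule R M {x} \<subseteq> N" "x \<in> carrier M"
      using gen_submodule_least[OF that, of "{x}"] SMod_subset_carrier[OF that] by auto
    then show "x \<in> \<Union>{L. L \<subseteq> N \<and> fin_gen_submodule R M L}"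
      unfolding fin_gen_submodule_def using gen_submodule_superset[of "{x}" R M] by blast
  qed
  then show "finite_type R M id" unfolding finite_type_def by auto
qed

lemma (in module) compactin_hull_kernel_avoiding:
  "compactin (hull_kernel_topology R M) (avoiding G \<inter> SMod R M)"
  using finite_type_closure.compactin_avoiding[OF finite_type_closure_id, of G]
  by (simp add: closed_SMod_def compactin_subtopology)

lemma topspace_constructible_hull_kernel:
  "topspace (constructible_topology (hull_kernel_topology R M)) = SMod R M"
proof -
  let ?H = "hull_kernel_topology R M"
  have "topspace (constructible_topology ?H) = topspace ?H"
    unfolding constructible_topology_def topology_generated_by_topspace
  proof
    show "topspace ?H \<subseteq> \<Union>({U. openin ?H U \<and> compactin ?H U} \<union>
        {topspace ?H - U | U. openin ?H U \<and> compactin ?H U})"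
      using openin_empty compactin_empty by blast
  qed (use openin_subset in blast)
  then show ?thesis by (simp add: topspace_hull_kernel_topology)
qed

lemma (in module) openin_constructible_containing_avoiding:
  assumes E: "finite E" "E \<subseteq> carrier M" and z: "z \<in> carrier M"
  shows "openin (constructible_topology (hull_kernel_topology R M)) {N \<in> SMod R M. E \<subseteq> N \<and> z \<notin> N}"
proof -
  let ?H = "hull_kernel_topology R M" and ?S = "SMod R M"
  define U where "U = ?S - V_sub R M E"
  have "openin ?H U"
    unfolding U_def hull_kernel_topology_def using E by (intro topology_generated_by_Basis) blast
  moreover have "compactin ?H U"
  proof -
    have "compactin ?H (\<Union>x\<in>E. avoiding {x} \<inter> ?S)"
      using E(1) compactin_hull_kernel_avoiding by (intro compactin_Union) auto
    moreover have "U = (\<Union>x\<in>E. avoiding {x} \<inter> ?S)" unfolding U_def V_sub_def by auto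
    ultimately show ?thesis by simp
  qed
  moreover have "openin ?H (avoiding {z} \<inter> ?S)" "compactin ?H (avoiding {z} \<inter> ?S)"
    using openin_hull_kernel_avoiding[of "{z}"] z compactin_hull_kernel_avoiding by auto
  ultimately have "openin (constructible_topology ?H) ((topspace ?H - U) \<inter> (avoiding {z} \<inter> ?S))"
    unfolding constructible_topology_def by (intro openin_Int topology_generated_by_Basis) blast+
  moreover have "(topspace ?H - U) \<inter> (avoiding {z} \<inter> ?S) = {N \<in> ?S. E \<subseteq> N \<and> z \<notin> N}"
    by (auto simp: U_def V_sub_def topspace_hull_kernel_topology)
  ultimately show ?thesis by simp
qed

lemma (in finite_type_closure) closedin_constructible_closed_SMod:
  "closedin (constructible_topology (hull_kernel_topology R M)) (closed_SMod R M c)"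
proof -
  let ?K = "constructible_topology (hull_kernel_topology R M)"
    and ?S = "SMod R M" and ?X = "closed_SMod R M c"
  have "openin ?K (?S - ?X)"
  proof (subst openin_subopen, intro ballI)
    fix N assume N: "N \<in> ?S - ?X"
    then have "N \<in> ?S" "N \<noteq> c N" unfolding closed_SMod_def by auto
    then obtain z where z: "z \<in> c N" "z \<notin> N" using closure_extensive by blast
    then obtain E where E: "finite E" "E \<subseteq> N" "z \<in> c (gen_submodule R M E)"
      using mem_closure_finite_generators \<open>N \<in> ?S\<close> by blast
    have "z \<in> carrier M" using z(1) closure_in_SMod[OF \<open>N \<in> ?S\<close>] SMod_subset_carrier by blast
    moreover have "E \<subseteq> carrier M" using E(2) \<open>N \<in> ?S\<close> SMod_subset_carrier by blast
    ultimately have "openin ?K {N' \<in> ?S. E \<subseteq> N' \<and> z \<notin> N'}"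
      using E(1) by (intro openin_constructible_containing_avoiding)
    moreover have "N \<in> {N' \<in> ?S. E \<subseteq> N' \<and> z \<notin> N'}" using N E(2) z(2) by blast
    moreover have "{N' \<in> ?S. E \<subseteq> N' \<and> z \<notin> N'} \<subseteq> ?S - ?X"
    proof
      fix N' assume N': "N' \<in> {N' \<in> ?S. E \<subseteq> N' \<and> z \<notin> N'}"
      have "N' \<notin> ?X"
      proof
        assume "N' \<in> ?X"
        then have "c (gen_submodule R M E) \<subseteq> N'"
          using N' by (intro closure_gen_submodule_le_closed) auto
        with E(3) N' show False by blast
      qed
      with N' show "N' \<in> ?S - ?X" by blast
    qed
    ultimately show "\<exists>T. openin ?K T \<and> N \<in> T \<and> T \<subseteq> ?S - ?X" by blast
  qed
  then show ?thesis
    unfolding closedin_def topspace_constructible_hull_kernel using closed_SMod_subset by blast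
qed

theorem proposition3p4:
  assumes "module R M"
    and "closure_operation R M c"
    and "finite_type R M c"
  shows "spectral_space (subtopology (hull_kernel_topology R M) (closed_SMod R M c)) \<and>
         closedin (constructible_topology (hull_kernel_topology R M)) (closed_SMod R M c)"
proof -
  interpret finite_type_closure R M c
    using assms by (simp add: finite_type_closure_def finite_type_closure_axioms_def)
  show ?thesis using spectral_space_closed_SMod closedin_constructible_closed_SMod by blast
qed

end
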